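(* Let $a=\alpha_0A_0+\alpha_1A_1+\alpha_2A_2+\alpha_3A_3$ with $\alpha_i\in K[X]$, where $A_0=\begin{pmatrix} h_1&0\\ 0&h_1\end{pmatrix}$, $A_1=\begin{pmatrix} 0&0\\ 0&h_1\end{pmatrix}$, $A_2=\begin{pmatrix} 0&h_2\\ -h_3&h_4\end{pmatrix}$, $A_3=\begin{pmatrix} h_4&0\\ 0&h_4\end{pmatrix}$. If $a\in F$, then $a$ is strongly central in $F$.
   Context: $K$ is an infinite field of characteristic different from 2. Let $X=\{x_1,x_2,x_1',x_2'\}$ and $Y=\{y_1,y_2,y_1',y_2'\}$, and let $K[X;Y]\cong K[X]\otimes_K E(Y)$ be the free supercommutative algebra: the $x$'s are even commuting variables, the $y$'s are odd pairwise anticommuting variables, and $E(Y)$ is the Grassmann algebra on the vector space with basis $Y$. Put $C_1=\begin{pmatrix} x_1&y_1\\ y_1'&x_1'\end{pmatrix}$, $C_2=\begin{pmatrix} x_2&y_2\\ y_2'&x_2'\end{pmatrix}$, and let $F=K[C_1,C_2]$ be the unital $K$-subalgebra of $M_2(K[X;Y])$ generated by $C_1,C_2$; elements of $K[X]$ act on matrices as scalars. Define $h_1=y_1y_2y_1'y_2'$, $h_2=y_1y_2\big(y_1'(x_2'-x_2)-y_2'(x_1'-x_1)\big)$, $h_3=y_1'y_2'\big(y_1(x_2'-x_2)-y_2(x_1'-x_1)\big)$, $h_4=\big(y_1'(x_2'-x_2)-y_2'(x_1'-x_1)\big)\big(y_1(x_2'-x_2)-y_2(x_1'-x_1)\big)$.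 An element $a\in F$ is called strongly central if $a$ is central in $F$ and $ab$ is central in $F$ for every $b\in F$. *)

theory Defs
  imports Main "HOL-Library.Poly_Mapping"
begin

text \<open>K[X]: commutative polynomials over 'k in the even variables, indexed by nat:
  x1 = 0, x2 = 1, x1' = 2, x2' = 3.  A monomial is an exponent vector nat =>0 nat.\<close>
type_synonym 'k xpoly = "(nat \<Rightarrow>\<^sub>0 nat) \<Rightarrow>\<^sub>0 'k"

definition xvar :: "nat \<Rightarrow> 'k::comm_ring_1 xpoly" where
  "xvar i = Poly_Mapping.single (Poly_Mapping.single i 1) 1"

definition xconst :: "'k::comm_ring_1 \<Rightarrow> 'k xpoly" where
  "xconst c = Poly_Mapping.single 0 c"

text \<open>K[X;Y] = K[X] (tensor) E(Y): an element is a function assigning to each finite set S of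
  odd-variable indices (y1 = 0, y2 = 1, y1' = 2, y2' = 3) the K[X]-coefficient of the
  Grassmann monomial y_S (product of the y_i, i in S, in increasing order of i).\<close>
type_synonym 'k sc = "nat set \<Rightarrow> 'k xpoly"

definition sc_carrier :: "'k::comm_ring_1 sc set" where
  "sc_carrier = {f. \<forall>S. \<not> S \<subseteq> {0..3} \<longrightarrow> f S = 0}"

text \<open>Sign of y_A * y_B = sgn A B * y_(A \<union> B) for disjoint A, B.\<close>
definition sgn :: "nat set \<Rightarrow> nat set \<Rightarrow> 'k::comm_ring_1" where
  "sgn A B = (-1) ^ card {(a, b). a \<in> A \<and> b \<in> B \<and> b < a}"

definition sc_add :: "'k::comm_ring_1 sc \<Rightarrow> 'k sc \<Rightarrow> 'k sc" where
  "sc_add f g = (\<lambda>S. f S + g S)"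

definition sc_neg :: "'k::comm_ring_1 sc \<Rightarrow> 'k sc" where
  "sc_neg f = (\<lambda>S. - f S)"

definition sc_sub :: "'k::comm_ring_1 sc \<Rightarrow> 'k sc \<Rightarrow> 'k sc" where
  "sc_sub f g = (\<lambda>S. f S - g S)"

definition sc_zero :: "'k::comm_ring_1 sc" where
  "sc_zero = (\<lambda>S. 0)"

definition sc_mul :: "'k::comm_ring_1 sc \<Rightarrow> 'k sc \<Rightarrow> 'k sc" where
  "sc_mul f g = (\<lambda>S. \<Sum>A\<in>Pow S. sgn A (S - A) * f A * g (S - A))"

definition sc_of :: "'k::comm_ring_1 xpoly \<Rightarrow> 'k sc" where
  "sc_of p = (\<lambda>S. if S = {} then p else 0)"

definition sc_x :: "nat \<Rightarrow> 'k::comm_ring_1 sc" where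
  "sc_x i = sc_of (xvar i)"

definition sc_y :: "nat \<Rightarrow> 'k::comm_ring_1 sc" where
  "sc_y i = (\<lambda>S. if S = {i} then 1 else 0)"

definition sc_scale :: "'k::comm_ring_1 xpoly \<Rightarrow> 'k sc \<Rightarrow> 'k sc" where
  "sc_scale p f = (\<lambda>S. p * f S)"

text \<open>2x2 matrices (a, b, c, d) = [[a, b], [c, d]] over K[X;Y].\<close>
type_synonym 'k mat2 = "'k sc \<times> 'k sc \<times> 'k sc \<times> 'k sc"

definition mat :: "'k::comm_ring_1 sc \<Rightarrow> 'k sc \<Rightarrow> 'k sc \<Rightarrow> 'k sc \<Rightarrow> 'k mat2" where
  "mat a b c d = (a, b, c, d)"

fun m_add :: "'k::comm_ring_1 mat2 \<Rightarrow> 'k mat2 \<Rightarrow> 'k mat2" where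
  "m_add (a, b, c, d) (a', b', c', d') =
     (sc_add a a', sc_add b b', sc_add c c', sc_add d d')"

fun m_mul :: "'k::comm_ring_1 mat2 \<Rightarrow> 'k mat2 \<Rightarrow> 'k mat2" where
  "m_mul (a, b, c, d) (a', b', c', d') =
     (sc_add (sc_mul a a') (sc_mul b c'), sc_add (sc_mul a b') (sc_mul b d'),
      sc_add (sc_mul c a') (sc_mul d c'), sc_add (sc_mul c b') (sc_mul d d'))"

fun m_scale :: "'k::comm_ring_1 xpoly \<Rightarrow> 'k mat2 \<Rightarrow> 'k mat2" where
  "m_scale p (a, b, c, d) = (sc_scale p a, sc_scale p b, sc_scale p c, sc_scale p d)"

definition m_one :: "'k::comm_ring_1 mat2" where
  "m_one = (sc_of 1, sc_zero, sc_zero, sc_of 1)"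

definition C1 :: "'k::comm_ring_1 mat2" where
  "C1 = mat (sc_x 0) (sc_y 0) (sc_y 2) (sc_x 2)"

definition C2 :: "'k::comm_ring_1 mat2" where
  "C2 = mat (sc_x 1) (sc_y 1) (sc_y 3) (sc_x 3)"

inductive_set F_alg :: "'k::comm_ring_1 mat2 set" where
  one: "m_one \<in> F_alg"
| gen1: "C1 \<in> F_alg"
| gen2: "C2 \<in> F_alg"
| add: "a \<in> F_alg \<Longrightarrow> b \<in> F_alg \<Longrightarrow> m_add a b \<in> F_alg"
| mul: "a \<in> F_alg \<Longrightarrow> b \<in> F_alg \<Longrightarrow> m_mul a b \<in> F_alg"
| smul: "a \<in> F_alg \<Longrightarrow> m_scale (xconst c) a \<in> F_alg"

definition central_in_F :: "'k::comm_ring_1 mat2 \<Rightarrow> bool" where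
  "central_in_F a \<longleftrightarrow> a \<in> F_alg \<and> (\<forall>b\<in>F_alg. m_mul a b = m_mul b a)"

definition strongly_central :: "'k::comm_ring_1 mat2 \<Rightarrow> bool" where
  "strongly_central a \<longleftrightarrow> central_in_F a \<and> (\<forall>b\<in>F_alg. central_in_F (m_mul a b))"

definition dx1 :: "'k::comm_ring_1 sc" where "dx1 = sc_sub (sc_x 2) (sc_x 0)"
definition dx2 :: "'k::comm_ring_1 sc" where "dx2 = sc_sub (sc_x 3) (sc_x 1)"

definition h1 :: "'k::comm_ring_1 sc" where
  "h1 = sc_mul (sc_mul (sc_mul (sc_y 0) (sc_y 1)) (sc_y 2)) (sc_y 3)"

definition u' :: "'k::comm_ring_1 sc" where
  "u' = sc_sub (sc_mul (sc_y 2) dx2) (sc_mul (sc_y 3) dx1)"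

definition u :: "'k::comm_ring_1 sc" where
  "u = sc_sub (sc_mul (sc_y 0) dx2) (sc_mul (sc_y 1) dx1)"

definition h2 :: "'k::comm_ring_1 sc" where
  "h2 = sc_mul (sc_mul (sc_y 0) (sc_y 1)) u'"

definition h3 :: "'k::comm_ring_1 sc" where
  "h3 = sc_mul (sc_mul (sc_y 2) (sc_y 3)) u"

definition h4 :: "'k::comm_ring_1 sc" where
  "h4 = sc_mul u' u"

definition A0 :: "'k::comm_ring_1 mat2" where "A0 = mat h1 sc_zero sc_zero h1"
definition A1 :: "'k::comm_ring_1 mat2" where "A1 = mat sc_zero sc_zero sc_zero h1"
definition A2 :: "'k::comm_ring_1 mat2" where "A2 = mat sc_zero h2 (sc_neg h3) h4"
definition A3 :: "'k::comm_ring_1 mat2" where "A3 = mat h4 sc_zero sc_zero h4"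

end

theory Submission
  imports Defs
begin

text \<open>Each \<open>A\<^sub>i\<close> commutes with the generators \<open>C\<^sub>1, C\<^sub>2\<close> and annihilates their commutator
  \<open>[C\<^sub>1, C\<^sub>2]\<close>; this is a finite computation in the Grassmann algebra, and the three
  identities pass to K[X]-linear combinations. They suffice for strong centrality of any
  \<open>a \<in> F\<close>: commuting with the generators makes \<open>a\<close> central, and the condition
  \<open>a F [b, c] = 0\<close> spreads from the generators to all of \<open>F\<close> by induction on \<open>b\<close> and then
  on \<open>c\<close>, because \<open>[y z, c] = y [z, c] + [y, c] z\<close>. Hence \<open>a b c = a c b = c a b\<close> for
  \<open>b, c \<in> F\<close>, i.e. \<open>a b\<close> is central.\<close>

definition inversions :: "nat set \<Rightarrow> nat set \<Rightarrow> nat" where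
  "inversions A B = card {(a, b). a \<in> A \<and> b \<in> B \<and> b < a}"

lemma sgn_eq_inversions: "sgn A B = (-1) ^ inversions A B"
  by (simp add: sgn_def inversions_def)

lemma finite_inversion_pairs:
  "finite A \<Longrightarrow> finite B \<Longrightarrow> finite {(a, b). a \<in> A \<and> b \<in> B \<and> b < a}"
  by (rule finite_subset[of _ "A \<times> B"]) auto

lemma inversions_Un_left:
  assumes "A \<inter> B = {}" "finite A" "finite B" "finite C"
  shows "inversions (A \<union> B) C = inversions A C + inversions B C"
proof -
  have "{(a, c). a \<in> A \<union> B \<and> c \<in> C \<and> c < a} =
        {(a, c). a \<in> A \<and> c \<in> C \<and> c < a} \<union> {(a, c). a \<in> B \<and> c \<in> C \<and> c < a}" by auto
  moreover have "{(a, c). a \<in> A \<and> c \<in> C \<and> c < a} \<inter> {(a, c). a \<in> B \<and> c \<in> C \<and> c < a} = {}"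
    using assms(1) by auto
  ultimately show ?thesis
    unfolding inversions_def by (simp add: card_Un_disjoint finite_inversion_pairs assms)
qed

lemma inversions_Un_right:
  assumes "B \<inter> C = {}" "finite A" "finite B" "finite C"
  shows "inversions A (B \<union> C) = inversions A B + inversions A C"
proof -
  have "{(a, b). a \<in> A \<and> b \<in> B \<union> C \<and> b < a} =
        {(a, b). a \<in> A \<and> b \<in> B \<and> b < a} \<union> {(a, b). a \<in> A \<and> b \<in> C \<and> b < a}" by auto
  moreover have "{(a, b). a \<in> A \<and> b \<in> B \<and> b < a} \<inter> {(a, b). a \<in> A \<and> b \<in> C \<and> b < a} = {}"
    using assms(1) by auto
  ultimately show ?thesis
    unfolding inversions_def by (simp add: card_Un_disjoint finite_inversion_pairs assms)
qed

lemma sgn_Un_assoc: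
  assumes "A \<inter> B = {}" "A \<inter> C = {}" "B \<inter> C = {}" "finite A" "finite B" "finite C"
  shows "(sgn (A \<union> B) C * sgn A B :: 'k::comm_ring_1) = sgn A (B \<union> C) * sgn B C"
  using assms by (simp add: sgn_eq_inversions inversions_Un_left inversions_Un_right power_add)

lemma sgn_empty_left [simp]: "sgn {} B = 1"
  and sgn_empty_right [simp]: "sgn A {} = 1"
  by (simp_all add: sgn_def)

lemma sgn_insert_left:
  assumes "a \<notin> A" "finite A" "finite B"
  shows "sgn (insert a A) B = (if even (card (B \<inter> {..<a})) then 1 else -1) * sgn A B"
proof -
  have "{(x, b). x \<in> {a} \<and> b \<in> B \<and> b < x} = (\<lambda>b. (a, b)) ` (B \<inter> {..<a})" by auto
  then have "inversions {a} B = card (B \<inter> {..<a})"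
    unfolding inversions_def by (simp add: card_image inj_on_def)
  moreover have "inversions (insert a A) B = inversions {a} B + inversions A B"
    using inversions_Un_left[of "{a}" A B] assms by simp
  ultimately show ?thesis by (simp add: sgn_eq_inversions power_add minus_one_power_iff)
qed

lemma sum_Pow_Pow_reindex:
  assumes "finite S"
  shows "(\<Sum>T\<in>Pow S. \<Sum>A\<in>Pow T. f T A) = (\<Sum>A\<in>Pow S. \<Sum>B\<in>Pow (S - A). f (A \<union> B) A)"
proof -
  have "(\<Sum>T\<in>Pow S. \<Sum>A\<in>Pow T. f T A) = (\<Sum>T\<in>Pow S. \<Sum>A\<in>{A\<in>Pow S. A \<subseteq> T}. f T A)"
    by (intro sum.cong refl) auto
  also have "\<dots> = (\<Sum>A\<in>Pow S. \<Sum>T\<in>{T\<in>Pow S. A \<subseteq> T}. f T A)"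
    by (rule sum.swap_restrict) (use assms in auto)
  also have "\<dots> = (\<Sum>A\<in>Pow S. \<Sum>B\<in>Pow (S - A). f (A \<union> B) A)"
  proof (rule sum.cong[OF refl])
    fix A assume "A \<in> Pow S"
    then have "bij_betw ((\<union>) A) (Pow (S - A)) {T\<in>Pow S. A \<subseteq> T}"
      by (auto simp: bij_betw_def inj_on_def intro!: image_eqI[where x = "T - A" for T])
    then show "(\<Sum>T\<in>{T\<in>Pow S. A \<subseteq> T}. f T A) = (\<Sum>B\<in>Pow (S - A). f (A \<union> B) A)"
      by (rule sum.reindex_bij_betw[symmetric])
  qed
  finally show ?thesis .
qed

lemma sc_mul_assoc:
  fixes f g h :: "'k::comm_ring_1 sc"
  shows "sc_mul (sc_mul f g) h = sc_mul f (sc_mul g h)"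
proof
  fix S :: "nat set"
  show "sc_mul (sc_mul f g) h S = sc_mul f (sc_mul g h) S"
  proof (cases "finite S")
    case False
    then show ?thesis by (simp add: sc_mul_def)
  next
    case True
    have sign: "sgn (A \<union> B) (S - A - B) * sgn A B = (sgn A (S - A) * sgn B (S - A - B) :: 'k xpoly)"
      if "A \<subseteq> S" "B \<subseteq> S - A" for A B
    proof -
      have "sgn (A \<union> B) (S - A - B) * sgn A B = (sgn A (B \<union> (S - A - B)) * sgn B (S - A - B) :: 'k xpoly)"
        using that True by (intro sgn_Un_assoc) (auto intro: finite_subset)
      moreover have "B \<union> (S - A - B) = S - A" using that by auto
      ultimately show ?thesis by simp
    qed
    have "sc_mul (sc_mul f g) h S =
        (\<Sum>T\<in>Pow S. \<Sum>A\<in>Pow T. sgn T (S - T) * sgn A (T - A) * f A * g (T - A) * h (S - T))"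
      unfolding sc_mul_def by (simp add: sum_distrib_left sum_distrib_right mult.assoc)
    also have "\<dots> = (\<Sum>A\<in>Pow S. \<Sum>B\<in>Pow (S - A).
        sgn (A \<union> B) (S - A - B) * sgn A B * f A * g B * h (S - A - B))"
      unfolding sum_Pow_Pow_reindex[OF True]
    proof (intro sum.cong refl)
      fix A B assume "A \<in> Pow S" "B \<in> Pow (S - A)"
      then have "A \<union> B - A = B" "S - (A \<union> B) = S - A - B" by auto
      then show "sgn (A \<union> B) (S - (A \<union> B)) * sgn A (A \<union> B - A) * f A * g (A \<union> B - A) * h (S - (A \<union> B))
        = sgn (A \<union> B) (S - A - B) * sgn A B * f A * g B * h (S - A - B)" by simp
    qed
    also have "\<dots> = (\<Sum>A\<in>Pow S. \<Sum>B\<in>Pow (S - A).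
        sgn A (S - A) * sgn B (S - A - B) * f A * g B * h (S - A - B))"
      by (intro sum.cong refl) (simp add: sign)
    also have "\<dots> = sc_mul f (sc_mul g h) S"
      unfolding sc_mul_def by (simp add: sum_distrib_left mult_ac)
    finally show ?thesis .
  qed
qed

lemma sc_add_assoc: "sc_add (sc_add f g) h = sc_add f (sc_add g h)"
  and sc_add_commute: "sc_add f g = sc_add g f"
  and sc_add_left_commute: "sc_add f (sc_add g h) = sc_add g (sc_add f h)"
  by (simp_all add: sc_add_def ac_simps)

lemmas sc_add_ac = sc_add_assoc sc_add_commute sc_add_left_commute

lemma sc_add_zero_left [simp]: "sc_add sc_zero f = f"
  and sc_add_zero_right [simp]: "sc_add f sc_zero = f"
  by (simp_all add: sc_add_def sc_zero_def)

lemma sc_mul_zero_left [simp]: "sc_mul sc_zero f = sc_zero"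
  and sc_mul_zero_right [simp]: "sc_mul f sc_zero = sc_zero"
  by (simp_all add: sc_mul_def sc_zero_def fun_eq_iff)

lemma sc_mul_add_left: "sc_mul (sc_add f g) h = sc_add (sc_mul f h) (sc_mul g h)"
  and sc_mul_add_right: "sc_mul f (sc_add g h) = sc_add (sc_mul f g) (sc_mul f h)"
  by (simp_all add: sc_mul_def sc_add_def algebra_simps sum.distrib fun_eq_iff)

lemma sc_mul_scale_left: "sc_mul (sc_scale p f) g = sc_scale p (sc_mul f g)"
  and sc_mul_scale_right: "sc_mul f (sc_scale p g) = sc_scale p (sc_mul f g)"
  by (simp_all add: sc_mul_def sc_scale_def sum_distrib_left mult_ac fun_eq_iff)

lemma sc_scale_add: "sc_scale p (sc_add f g) = sc_add (sc_scale p f) (sc_scale p g)"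
  by (simp add: sc_scale_def sc_add_def distrib_left fun_eq_iff)

lemma sc_carrier_vanishes_infinite: "f \<in> sc_carrier \<Longrightarrow> infinite S \<Longrightarrow> f S = 0"
  unfolding sc_carrier_def using finite_subset by fastforce

text \<open>The carrier hypothesis handles infinite \<open>S\<close>: there \<open>sc_mul\<close> sums over the infinite \<open>Pow S\<close>, which gives \<open>0\<close>.\<close>
lemma sc_mul_one_left:
  assumes "f \<in> sc_carrier"
  shows "sc_mul (sc_of 1) f = f"
proof
  fix S :: "nat set"
  show "sc_mul (sc_of 1) f S = f S"
  proof (cases "finite S")
    case False
    then show ?thesis using sc_carrier_vanishes_infinite[OF assms] by (simp add: sc_mul_def)
  next
    case True
    have "sc_mul (sc_of 1) f S = (\<Sum>A\<in>Pow S. if A = {} then f S else 0)"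
      unfolding sc_mul_def sc_of_def by (rule sum.cong) auto
    with True show ?thesis by simp
  qed
qed

lemma sc_mul_one_right:
  assumes "f \<in> sc_carrier"
  shows "sc_mul f (sc_of 1) = f"
proof
  fix S :: "nat set"
  show "sc_mul f (sc_of 1) S = f S"
  proof (cases "finite S")
    case False
    then show ?thesis using sc_carrier_vanishes_infinite[OF assms] by (simp add: sc_mul_def)
  next
    case True
    have "sc_mul f (sc_of 1) S = (\<Sum>A\<in>Pow S. if A = S then f S else 0)"
      unfolding sc_mul_def sc_of_def by (rule sum.cong) auto
    with True show ?thesis by simp
  qed
qed

lemma sc_carrier_add: "f \<in> sc_carrier \<Longrightarrow> g \<in> sc_carrier \<Longrightarrow> sc_add f g \<in> sc_carrier"
  and sc_carrier_scale: "f \<in> sc_carrier \<Longrightarrow> sc_scale p f \<in> sc_carrier"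
  and sc_carrier_zero: "sc_zero \<in> sc_carrier"
  and sc_carrier_of: "sc_of p \<in> sc_carrier"
  and sc_carrier_y: "i \<le> 3 \<Longrightarrow> sc_y i \<in> sc_carrier"
  by (simp_all add: sc_carrier_def sc_add_def sc_scale_def sc_zero_def sc_of_def sc_y_def)

lemma sc_carrier_mul:
  assumes "f \<in> sc_carrier" "g \<in> sc_carrier"
  shows "sc_mul f g \<in> sc_carrier"
  unfolding sc_carrier_def mem_Collect_eq
proof (intro allI impI)
  fix S :: "nat set"
  assume S: "\<not> S \<subseteq> {0..3}"
  have zero: "f A = 0 \<or> g (S - A) = 0" for A
  proof (cases "A \<subseteq> {0..3}")
    case True
    then have "\<not> S - A \<subseteq> {0..3}" using S by auto
    then show ?thesis using assms(2) by (simp add: sc_carrier_def)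
  next
    case False
    then show ?thesis using assms(1) by (simp add: sc_carrier_def)
  qed
  then show "sc_mul f g S = 0"
    unfolding sc_mul_def by (intro sum.neutral ballI) (metis zero mult_zero_left mult_zero_right)
qed

definition m_carrier :: "'k::comm_ring_1 mat2 set" where
  "m_carrier = sc_carrier \<times> sc_carrier \<times> sc_carrier \<times> sc_carrier"

lemma F_alg_subset_m_carrier: "(F_alg :: 'k::comm_ring_1 mat2 set) \<subseteq> m_carrier"
proof
  fix a :: "'k mat2"
  assume "a \<in> F_alg"
  then show "a \<in> m_carrier"
  proof (induction rule: F_alg.induct)
    case (add a b)
    then show ?case
      by (cases a rule: prod_cases4; cases b rule: prod_cases4) (simp add: m_carrier_def sc_carrier_add)
  next
    case (mul a b)
    then show ?case
      by (cases a rule: prod_cases4; cases b rule: prod_cases4)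
        (simp add: m_carrier_def sc_carrier_add sc_carrier_mul)
  next
    case (smul a c)
    then show ?case by (cases a rule: prod_cases4) (simp add: m_carrier_def sc_carrier_scale)
  qed (simp_all add: m_carrier_def m_one_def C1_def C2_def mat_def sc_x_def
         sc_carrier_of sc_carrier_zero sc_carrier_y)
qed

lemma m_mul_assoc: "m_mul (m_mul a b) c = m_mul a (m_mul b c)"
  by (cases a rule: prod_cases4; cases b rule: prod_cases4; cases c rule: prod_cases4)
    (simp add: sc_mul_add_left sc_mul_add_right sc_mul_assoc sc_add_ac)

lemma m_mul_add_left: "m_mul (m_add a b) c = m_add (m_mul a c) (m_mul b c)"
  and m_mul_add_right: "m_mul a (m_add b c) = m_add (m_mul a b) (m_mul a c)"
  by (cases a rule: prod_cases4; cases b rule: prod_cases4; cases c rule: prod_cases4;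
      simp add: sc_mul_add_left sc_mul_add_right sc_add_ac)+

lemma m_mul_scale_left: "m_mul (m_scale p a) b = m_scale p (m_mul a b)"
  and m_mul_scale_right: "m_mul a (m_scale p b) = m_scale p (m_mul a b)"
  by (cases a rule: prod_cases4; cases b rule: prod_cases4;
      simp add: sc_mul_scale_left sc_mul_scale_right sc_scale_add)+

lemma m_mul_one_left: "a \<in> m_carrier \<Longrightarrow> m_mul m_one a = a"
  and m_mul_one_right: "a \<in> m_carrier \<Longrightarrow> m_mul a m_one = a"
  by (cases a rule: prod_cases4;
      simp add: m_carrier_def m_one_def sc_mul_one_left sc_mul_one_right)+

lemma commute_F_alg_if_commute_generators:
  fixes a b :: "'k::comm_ring_1 mat2"
  assumes "a \<in> m_carrier" "m_mul a C1 = m_mul C1 a" "m_mul a C2 = m_mul C2 a"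
    and "b \<in> F_alg"
  shows "m_mul a b = m_mul b a"
  using assms(4)
proof (induction rule: F_alg.induct)
  case (mul x y)
  have "m_mul a (m_mul x y) = m_mul (m_mul a x) y"
    by (simp add: m_mul_assoc)
  also have "\<dots> = m_mul x (m_mul a y)"
    using mul.IH(1) by (simp add: m_mul_assoc)
  also have "\<dots> = m_mul (m_mul x y) a"
    using mul.IH(2) by (simp add: m_mul_assoc)
  finally show ?case .
qed (use assms in \<open>simp_all add: m_mul_one_left m_mul_one_right m_mul_add_left m_mul_add_right
       m_mul_scale_left m_mul_scale_right\<close>)

text \<open>\<open>a x (b c - c b) = 0\<close> for all \<open>x \<in> F\<close>, phrased without subtraction.\<close>
definition annihilates_commutator :: "'k::comm_ring_1 mat2 \<Rightarrow> 'k mat2 \<Rightarrow> 'k mat2 \<Rightarrow> bool" where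
  "annihilates_commutator a b c \<longleftrightarrow>
     (\<forall>x\<in>F_alg. m_mul a (m_mul x (m_mul b c)) = m_mul a (m_mul x (m_mul c b)))"

lemma annihilates_commutator_commute:
  "annihilates_commutator a b c \<longleftrightarrow> annihilates_commutator a c b"
  by (auto simp: annihilates_commutator_def)

lemma annihilates_commutator_F_alg:
  fixes a b c :: "'k::comm_ring_1 mat2"
  assumes "c \<in> m_carrier" "annihilates_commutator a C1 c" "annihilates_commutator a C2 c"
    and "b \<in> F_alg"
  shows "annihilates_commutator a b c"
  using assms(4)
proof (induction rule: F_alg.induct)
  case (mul y z)
  show ?case
    unfolding annihilates_commutator_def
  proof
    fix x :: "'k mat2" assume x: "x \<in> F_alg"
    have "m_mul a (m_mul x (m_mul (m_mul y z) c)) = m_mul a (m_mul (m_mul x y) (m_mul z c))"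
      by (simp add: m_mul_assoc)
    also have "\<dots> = m_mul a (m_mul (m_mul x y) (m_mul c z))"
      using mul.IH(2) F_alg.mul[OF x mul.hyps(1)] unfolding annihilates_commutator_def by blast
    also have "\<dots> = m_mul (m_mul a (m_mul x (m_mul y c))) z"
      by (simp add: m_mul_assoc)
    also have "\<dots> = m_mul (m_mul a (m_mul x (m_mul c y))) z"
      using mul.IH(1) x unfolding annihilates_commutator_def by simp
    also have "\<dots> = m_mul a (m_mul x (m_mul c (m_mul y z)))"
      by (simp add: m_mul_assoc)
    finally show "m_mul a (m_mul x (m_mul (m_mul y z) c)) = m_mul a (m_mul x (m_mul c (m_mul y z)))" .
  qed
qed (use assms in \<open>simp_all add: annihilates_commutator_def m_mul_one_left m_mul_one_right
       m_mul_add_left m_mul_add_right m_mul_scale_left m_mul_scale_right\<close>)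

lemma annihilates_commutator_all:
  fixes a b c :: "'k::comm_ring_1 mat2"
  assumes C12: "annihilates_commutator a C1 C2" and "b \<in> F_alg" "c \<in> F_alg"
  shows "annihilates_commutator a b c"
proof -
  have diagonal: "annihilates_commutator a C C" for C
    by (simp add: annihilates_commutator_def)
  have C_carrier: "C1 \<in> m_carrier" "C2 \<in> m_carrier"
    using F_alg.gen1 F_alg.gen2 F_alg_subset_m_carrier by blast+
  have generators: "annihilates_commutator a C1 d" "annihilates_commutator a C2 d"
    if "d \<in> F_alg" for d
    using annihilates_commutator_F_alg[OF C_carrier(1) diagonal _ that]
      annihilates_commutator_F_alg[OF C_carrier(2) C12 diagonal that] C12
    by (simp_all add: annihilates_commutator_commute)
  have "annihilates_commutator a c b"
  proof (rule annihilates_commutator_F_alg)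
    show "b \<in> m_carrier" using \<open>b \<in> F_alg\<close> F_alg_subset_m_carrier by blast
  qed (use generators \<open>b \<in> F_alg\<close> \<open>c \<in> F_alg\<close> in auto)
  then show ?thesis by (simp add: annihilates_commutator_commute)
qed

definition strongly_central_criterion :: "'k::comm_ring_1 mat2 \<Rightarrow> bool" where
  "strongly_central_criterion a \<longleftrightarrow>
     m_mul a C1 = m_mul C1 a \<and> m_mul a C2 = m_mul C2 a \<and>
     m_mul a (m_mul C1 C2) = m_mul a (m_mul C2 C1)"

lemma strongly_central_if_criterion:
  fixes a :: "'k::comm_ring_1 mat2"
  assumes aF: "a \<in> F_alg" and crit: "strongly_central_criterion a"
  shows "strongly_central a"
proof -
  have central: "m_mul a b = m_mul b a" if "b \<in> F_alg" for b
  proof (rule commute_F_alg_if_commute_generators[OF _ _ _ that])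
    show "a \<in> m_carrier" using aF F_alg_subset_m_carrier by blast
  qed (use crit in \<open>simp_all add: strongly_central_criterion_def\<close>)
  have "annihilates_commutator a C1 C2"
    unfolding annihilates_commutator_def
  proof
    fix x :: "'k mat2" assume "x \<in> F_alg"
    then have "m_mul a (m_mul x y) = m_mul x (m_mul a y)" for y
      using central[of x] m_mul_assoc[of a x y] m_mul_assoc[of x a y] by simp
    then show "m_mul a (m_mul x (m_mul C1 C2)) = m_mul a (m_mul x (m_mul C2 C1))"
      using crit by (simp add: strongly_central_criterion_def)
  qed
  then have commutator: "m_mul a (m_mul b c) = m_mul a (m_mul c b)"
    if "b \<in> F_alg" "c \<in> F_alg" for b c
  proof -
    have "m_mul a (m_mul m_one (m_mul b c)) = m_mul a (m_mul m_one (m_mul c b))"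
      using annihilates_commutator_all[OF _ that] F_alg.one \<open>annihilates_commutator a C1 C2\<close>
      unfolding annihilates_commutator_def by blast
    moreover have "m_mul b c \<in> m_carrier" "m_mul c b \<in> m_carrier"
      using that F_alg.mul F_alg_subset_m_carrier by blast+
    ultimately show ?thesis by (simp add: m_mul_one_left)
  qed
  have "central_in_F a"
    unfolding central_in_F_def using aF central by simp
  moreover have "central_in_F (m_mul a b)" if "b \<in> F_alg" for b
    unfolding central_in_F_def
  proof (intro conjI ballI)
    show "m_mul a b \<in> F_alg" using aF that by (rule F_alg.mul)
    fix c :: "'k mat2" assume "c \<in> F_alg"
    have "m_mul (m_mul a b) c = m_mul a (m_mul c b)"
      using commutator[OF that \<open>c \<in> F_alg\<close>] by (simp add: m_mul_assoc)
    also have "\<dots> = m_mul c (m_mul a b)"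
      using central[OF \<open>c \<in> F_alg\<close>] by (simp add: m_mul_assoc[symmetric])
    finally show "m_mul (m_mul a b) c = m_mul c (m_mul a b)" .
  qed
  ultimately show ?thesis
    unfolding strongly_central_def by blast
qed

lemma strongly_central_criterion_m_add:
  "strongly_central_criterion a \<Longrightarrow> strongly_central_criterion b \<Longrightarrow>
    strongly_central_criterion (m_add a b)"
  by (simp add: strongly_central_criterion_def m_mul_add_left m_mul_add_right)

lemma strongly_central_criterion_m_scale:
  "strongly_central_criterion a \<Longrightarrow> strongly_central_criterion (m_scale p a)"
  by (simp add: strongly_central_criterion_def m_mul_scale_left m_mul_scale_right)

definition sc_monom :: "nat set \<Rightarrow> 'k::comm_ring_1 xpoly \<Rightarrow> 'k sc" where
  "sc_monom S c = (\<lambda>T. if T = S then c else 0)"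

lemma sc_monom_mul:
  assumes "finite A" "finite B"
  shows "sc_mul (sc_monom A p) (sc_monom B q) =
    (if A \<inter> B = {} then sc_monom (A \<union> B) (sgn A B * p * q) else sc_zero)"
proof
  fix S :: "nat set"
  show "sc_mul (sc_monom A p) (sc_monom B q) S =
    (if A \<inter> B = {} then sc_monom (A \<union> B) (sgn A B * p * q) else sc_zero) S"
  proof (cases "finite S")
    case False
    then have "S \<noteq> A \<union> B" using assms by auto
    with False show ?thesis by (simp add: sc_mul_def sc_monom_def sc_zero_def)
  next
    case True
    have "sc_mul (sc_monom A p) (sc_monom B q) S =
        (\<Sum>C\<in>Pow S. if C = A then (if S - A = B then sgn A B * p * q else 0) else 0)"
      unfolding sc_mul_def sc_monom_def by (rule sum.cong) auto
    also have "\<dots> = (if A \<subseteq> S \<and> S - A = B then sgn A B * p * q else 0)"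
      using True by simp
    finally show ?thesis by (auto simp: sc_monom_def sc_zero_def)
  qed
qed

lemma sc_y_eq_monom: "sc_y i = sc_monom {i} 1"
  and sc_x_eq_monom: "sc_x i = sc_monom {} (xvar i)"
  and sc_neg_monom: "sc_neg (sc_monom S c) = sc_monom S (- c)"
  and sc_scale_monom: "sc_scale p (sc_monom S c) = sc_monom S (p * c)"
  by (simp_all add: sc_y_def sc_x_def sc_of_def sc_neg_def sc_scale_def sc_monom_def fun_eq_iff)

lemma sc_sub_eq_add_neg: "sc_sub f g = sc_add f (sc_neg g)"
  and sc_neg_add: "sc_neg (sc_add f g) = sc_add (sc_neg f) (sc_neg g)"
  and sc_neg_zero: "sc_neg sc_zero = sc_zero"
  and sc_scale_zero: "sc_scale p sc_zero = sc_zero"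
  by (simp_all add: sc_sub_def sc_add_def sc_neg_def sc_zero_def sc_scale_def)

lemma sc_monom_apply:
  assumes "S \<subseteq> {0..3}" "T \<subseteq> {0..3}"
  shows "sc_monom S c T = (if \<forall>i\<in>{0,1,2,3}. i \<in> T \<longleftrightarrow> i \<in> S then c else 0)"
proof -
  have "{0..3} = {0, 1, 2, 3 :: nat}" by auto
  then have "T = S \<longleftrightarrow> (\<forall>i\<in>{0,1,2,3}. i \<in> T \<longleftrightarrow> i \<in> S)"
    using assms by auto
  then show ?thesis by (simp add: sc_monom_def)
qed

lemma sc_monom_apply_outside:
  "S \<subseteq> {0..3} \<Longrightarrow> \<not> T \<subseteq> {0..3} \<Longrightarrow> sc_monom S c T = 0"
  by (auto simp: sc_monom_def)

lemma sc_add_apply: "sc_add f g T = f T + g T"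
  and sc_zero_apply: "sc_zero T = 0"
  by (simp_all add: sc_add_def sc_zero_def)

lemmas sc_monom_simps = sc_y_eq_monom sc_x_eq_monom sc_sub_eq_add_neg sc_neg_add sc_neg_monom
  sc_neg_zero sc_scale_monom sc_scale_zero sc_scale_add sc_mul_add_left sc_mul_add_right
  sc_monom_mul sgn_insert_left

lemma h_eq_monom_sums:
  defines "d1 \<equiv> xvar 2 - xvar 0 :: 'k::comm_ring_1 xpoly" and "d2 \<equiv> xvar 3 - xvar 1 :: 'k xpoly"
  shows "(h1 :: 'k sc) = sc_monom {0, 1, 2, 3} 1"
    and "(h2 :: 'k sc) = sc_add (sc_monom {0, 1, 2} d2) (sc_monom {0, 1, 3} (- d1))"
    and "(h3 :: 'k sc) = sc_add (sc_monom {0, 2, 3} d2) (sc_monom {1, 2, 3} (- d1))"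
    and "(h4 :: 'k sc) = sc_add (sc_add (sc_monom {0, 2} (- d2 * d2)) (sc_monom {1, 2} (d1 * d2)))
          (sc_add (sc_monom {0, 3} (d1 * d2)) (sc_monom {1, 3} (- d1 * d1)))"
  unfolding h1_def h2_def h3_def h4_def u_def u'_def dx1_def dx2_def d1_def d2_def
  by (simp_all add: sc_monom_simps)
    (rule ext; case_tac "x \<subseteq> {0..3}";
      (case_tac "0 \<in> x"; case_tac "1 \<in> x"; case_tac "2 \<in> x"; case_tac "3 \<in> x")?;
      simp add: sc_add_apply sc_zero_apply sc_monom_apply sc_monom_apply_outside algebra_simps)+

lemma strongly_central_criterion_A:
  "strongly_central_criterion (A0 :: 'k::comm_ring_1 mat2)"
  "strongly_central_criterion (A1 :: 'k::comm_ring_1 mat2)"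
  "strongly_central_criterion (A2 :: 'k::comm_ring_1 mat2)"
  "strongly_central_criterion (A3 :: 'k::comm_ring_1 mat2)"
  unfolding strongly_central_criterion_def A0_def A1_def A2_def A3_def C1_def C2_def mat_def
    h_eq_monom_sums
  by (simp_all add: sc_monom_simps)
    ((intro conjI)?; rule ext; case_tac "x \<subseteq> {0..3}";
      (case_tac "0 \<in> x"; case_tac "1 \<in> x"; case_tac "2 \<in> x"; case_tac "3 \<in> x")?;
      simp add: sc_add_apply sc_zero_apply sc_monom_apply sc_monom_apply_outside algebra_simps)+

theorem lemma5:
  fixes \<alpha>0 \<alpha>1 \<alpha>2 \<alpha>3 :: "'k::field xpoly"
  assumes "infinite (UNIV :: 'k set)"
    and "(2::'k) \<noteq> 0"
    and "m_add (m_add (m_scale \<alpha>0 A0) (m_scale \<alpha>1 A1))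
               (m_add (m_scale \<alpha>2 A2) (m_scale \<alpha>3 A3)) \<in> F_alg"
  shows "strongly_central
           (m_add (m_add (m_scale \<alpha>0 A0) (m_scale \<alpha>1 A1))
                  (m_add (m_scale \<alpha>2 A2) (m_scale \<alpha>3 A3)))"
  using assms(3)
  by (intro strongly_central_if_criterion strongly_central_criterion_m_add
      strongly_central_criterion_m_scale strongly_central_criterion_A)

end
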